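(* Let $G$ be a just infinite profinite group, and let $K$ and $L$ be normal subgroups of $G$ with $L < K$ such that $K/L$ is a chief factor of $G$. Then there is a critical pair $(A, A\cap L)$ in $G$ with $AL = K$. In particular $K/L \cong A/(A\cap L)$ and $C_G(K/L) = C_G(A/(A\cap L))$.
   Context: All groups are profinite, subgroups closed. A profinite group is \emph{just infinite} if it is infinite and every non-trivial closed normal subgroup has finite index. For normal subgroups $B<A$, $A/B$ is a \emph{chief factor} of $G$ if there is no normal subgroup of $G$ strictly between $B$ and $A$, and $(A,B)$ is a \emph{critical pair} if $B$ contains every normal subgroup of $G$ properly contained in $A$. $C_G(A/B) = \{g \in G: [g,a]\in B \ \forall a \in A\}$. *)

theory Defs
  imports "HOL-Analysis.Analysis" "HOL-Algebra.Algebra"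
begin

definition profinite_group :: "('a, 'b) monoid_scheme \<Rightarrow> 'a topology \<Rightarrow> bool" where
  "profinite_group G T \<longleftrightarrow> group G \<and> topspace T = carrier G
     \<and> continuous_map (prod_topology T T) T (\<lambda>p. fst p \<otimes>\<^bsub>G\<^esub> snd p)
     \<and> continuous_map T T (\<lambda>x. inv\<^bsub>G\<^esub> x)
     \<and> compact_space T \<and> Hausdorff_space T
     \<and> (\<forall>x y. connected_component_of T x y \<longrightarrow> x = y)"

text \<open>Closed normal subgroups (all subgroups are tacitly closed).\<close>
definition closed_normal :: "('a, 'b) monoid_scheme \<Rightarrow> 'a topology \<Rightarrow> 'a set \<Rightarrow> bool" where
  "closed_normal G T N \<longleftrightarrow> N \<lhd> G \<and> closedin T N"

definition just_infinite :: "('a, 'b) monoid_scheme \<Rightarrow> 'a topology \<Rightarrow> bool" where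
  "just_infinite G T \<longleftrightarrow> infinite (carrier G) \<and>
     (\<forall>N. closed_normal G T N \<and> N \<noteq> {\<one>\<^bsub>G\<^esub>} \<longrightarrow> finite (rcosets\<^bsub>G\<^esub> N))"

definition chief_factor :: "('a, 'b) monoid_scheme \<Rightarrow> 'a topology \<Rightarrow> 'a set \<Rightarrow> 'a set \<Rightarrow> bool" where
  "chief_factor G T K L \<longleftrightarrow> closed_normal G T K \<and> closed_normal G T L \<and> L \<subset> K \<and>
     \<not> (\<exists>N. closed_normal G T N \<and> L \<subset> N \<and> N \<subset> K)"

definition critical_pair :: "('a, 'b) monoid_scheme \<Rightarrow> 'a topology \<Rightarrow> 'a set \<Rightarrow> 'a set \<Rightarrow> bool" where
  "critical_pair G T A B \<longleftrightarrow> closed_normal G T A \<and> closed_normal G T B \<and> B \<subset> A \<and>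
     (\<forall>N. closed_normal G T N \<and> N \<subset> A \<longrightarrow> N \<subseteq> B)"

definition centralizer_factor :: "('a, 'b) monoid_scheme \<Rightarrow> 'a set \<Rightarrow> 'a set \<Rightarrow> 'a set" where
  "centralizer_factor G A B = {g \<in> carrier G. \<forall>a \<in> A.
     inv\<^bsub>G\<^esub> g \<otimes>\<^bsub>G\<^esub> inv\<^bsub>G\<^esub> a \<otimes>\<^bsub>G\<^esub> g \<otimes>\<^bsub>G\<^esub> a \<in> B}"

end

theory Submission
  imports Defs
begin

text \<open>
  Among the closed normal subgroups A of G
  with AL = K (supplements of L in K; K itself is one) we choose a minimal one. Minimal elements exist by Zorn's lemma:
  the intersection of a descending chain of such subgroups again satisfies AL = K, because for
  k \<in> K the closed sets D \<inter> kL, D in the chain, form a chain of non-empty closed sets in the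
  compact space G and hence have a common point. For a minimal A, every closed normal N < A has
  NL = L (since L \<le> NL \<le> K and NL = K would contradict minimality), i.e. N \<le> A \<inter> L; so
  (A, A \<inter> L) is a critical pair. The isomorphism K/L \<cong> A/(A \<inter> L) is the second isomorphism
  theorem, and the equality of centralizers is a direct commutator computation using AL = K.

  The argument works in every profinite group.
\<close>

lemma minimal_element_Inter_closed:
  assumes "S \<noteq> {}"
    and "\<And>\<C>. \<C> \<noteq> {} \<Longrightarrow> subset.chain S \<C> \<Longrightarrow> \<Inter>\<C> \<in> S"
  shows "\<exists>A\<in>S. \<forall>B\<in>S. B \<subseteq> A \<longrightarrow> B = A"
proof -
  have "\<exists>M\<in>uminus ` S. \<forall>N\<in>uminus ` S. M \<subseteq> N \<longrightarrow> N = M"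
  proof (rule subset_Zorn_nonempty)
    show "uminus ` S \<noteq> {}" using assms(1) by simp
    fix \<C> assume ne: "\<C> \<noteq> {}" and chain: "subset.chain (uminus ` S) \<C>"
    have "subset.chain S (uminus ` \<C>)"
      using chain unfolding subset_chain_def by (auto simp: image_subset_iff)
    moreover have "uminus ` \<C> \<noteq> {}" using ne by simp
    ultimately have "\<Inter>(uminus ` \<C>) \<in> S" by (rule assms(2)[rotated])
    moreover have "\<Union>\<C> = - \<Inter>(uminus ` \<C>)" by auto
    ultimately show "\<Union>\<C> \<in> uminus ` S" by (metis image_eqI)
  qed
  then obtain M where "M \<in> uminus ` S" and M_max: "\<forall>N\<in>uminus ` S. M \<subseteq> N \<longrightarrow> N = M"
    by blast
  then obtain A where A: "A \<in> S" and "M = - A" by blast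
  have "B = A" if "B \<in> S" "B \<subseteq> A" for B
    using M_max \<open>M = - A\<close> that by (metis Compl_anti_mono double_compl image_eqI)
  with A show ?thesis by blast
qed

lemma compact_space_chain_Inter_nonempty:
  assumes "compact_space T"
    and "\<And>C. C \<in> \<C> \<Longrightarrow> closedin T C \<and> C \<noteq> {}"
    and "\<And>C D. C \<in> \<C> \<Longrightarrow> D \<in> \<C> \<Longrightarrow> C \<subseteq> D \<or> D \<subseteq> C"
  shows "\<Inter>\<C> \<noteq> {}"
proof -
  have closed: "\<forall>C\<in>\<C>. closedin T C" using assms(2) by blast
  have "\<Inter>\<F> \<noteq> {}" if fin: "finite \<F>" and sub: "\<F> \<subseteq> \<C>" for \<F>
  proof (cases "\<F> = {}")
    case False
    have "subset.chain \<C> \<F>"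
      unfolding subset_chain_def using sub assms(3) by blast
    then have "\<Inter>\<F> \<in> \<F>" by (rule Inter_in_chain[OF fin False])
    then show ?thesis using assms(2) sub by blast
  qed simp
  then show ?thesis using assms(1) closed by (simp add: compact_space_fip)
qed

lemma set_mult_as_image:
  "M <#>\<^bsub>G\<^esub> N = (\<lambda>p. fst p \<otimes>\<^bsub>G\<^esub> snd p) ` (M \<times> N)"
  unfolding set_mult_def by (auto simp: image_iff) blast+

text \<open>If multiplication is continuous on a compact Hausdorff space, the product of two closed
  sets is closed, being the continuous image of a compact set.\<close>
lemma closedin_set_mult:
  assumes "compact_space T" "Hausdorff_space T"
    and "continuous_map (prod_topology T T) T (\<lambda>p. fst p \<otimes>\<^bsub>G\<^esub> snd p)"
    and "closedin T M" "closedin T N"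
  shows "closedin T (M <#>\<^bsub>G\<^esub> N)"
proof -
  have "compactin (prod_topology T T) (M \<times> N)"
    using assms closedin_compact_space[OF assms(1)] by (simp add: compactin_Times)
  then have "compactin T (M <#>\<^bsub>G\<^esub> N)"
    unfolding set_mult_as_image using image_compactin assms(3) by blast
  then show ?thesis using compactin_imp_closedin assms(2) by blast
qed

lemma profinite_closedin_set_mult:
  assumes "profinite_group G T" "closedin T M" "closedin T N"
  shows "closedin T (M <#>\<^bsub>G\<^esub> N)"
  using assms closedin_set_mult unfolding profinite_group_def by blast

text \<open>Left cosets of closed sets are closed (points are closed in a Hausdorff space).\<close>
lemma profinite_closedin_l_coset:
  assumes "profinite_group G T" "closedin T L" "k \<in> carrier G"
  shows "closedin T (k <#\<^bsub>G\<^esub> L)"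
proof -
  have "closedin T {k}"
    using assms closedin_Hausdorff_singleton unfolding profinite_group_def by metis
  then show ?thesis
    unfolding l_coset_eq_set_mult using profinite_closedin_set_mult assms(1,2) by blast
qed

lemma (in group) set_mult_contains_left:
  assumes "M \<subseteq> carrier G" "subgroup N G"
  shows "M \<subseteq> M <#> N"
proof
  fix x assume "x \<in> M"
  then have "x = x \<otimes> \<one>" using assms(1) by auto
  then show "x \<in> M <#> N"
    unfolding set_mult_def using \<open>x \<in> M\<close> subgroup.one_closed[OF assms(2)] by blast
qed

lemma (in group) set_mult_contains_right:
  assumes "subgroup M G" "N \<subseteq> carrier G"
  shows "N \<subseteq> M <#> N"
proof
  fix x assume "x \<in> N"
  then have "x = \<one> \<otimes> x" using assms(2) by auto
  then show "x \<in> M <#> N"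
    unfolding set_mult_def using \<open>x \<in> N\<close> subgroup.one_closed[OF assms(1)] by blast
qed

lemma (in group) set_mult_absorb:
  assumes "subgroup A G" "subgroup N G" "N \<subseteq> A"
  shows "A <#> N = A"
proof
  show "A <#> N \<subseteq> A"
    unfolding set_mult_def using assms(3) subgroup.m_closed[OF assms(1)] by blast
  show "A \<subseteq> A <#> N"
    using set_mult_contains_left[OF subgroup.subset[OF assms(1)] assms(2)] .
qed

lemma (in group) normal_Inter:
  assumes "\<N> \<noteq> {}" "\<And>N. N \<in> \<N> \<Longrightarrow> N \<lhd> G"
  shows "\<Inter>\<N> \<lhd> G"
proof -
  have "subgroup (\<Inter>\<N>) G"
    using subgroups_Inter[OF normal_imp_subgroup[OF assms(2)] assms(1)] .
  moreover have "x \<otimes> h \<otimes> inv x \<in> \<Inter>\<N>" if "x \<in> carrier G" "h \<in> \<Inter>\<N>" for x h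
    using normal.inv_op_closed2[OF assms(2) that(1)] that(2) by blast
  ultimately show ?thesis by (simp add: normal_inv_iff)
qed

lemma closed_normal_Inter:
  assumes "group G" "\<N> \<noteq> {}" "\<And>N. N \<in> \<N> \<Longrightarrow> closed_normal G T N"
  shows "closed_normal G T (\<Inter>\<N>)"
proof -
  have "\<Inter>\<N> \<lhd> G"
    using group.normal_Inter[OF assms(1,2)] assms(3) unfolding closed_normal_def by blast
  moreover have "closedin T (\<Inter>\<N>)"
    using closedin_Inter[OF assms(2)] assms(3) unfolding closed_normal_def by blast
  ultimately show ?thesis unfolding closed_normal_def by blast
qed

text \<open>k lies in DL exactly when D meets the coset kL; this turns membership in a product
  into a non-emptiness statement about closed sets.\<close>
lemma (in group) mem_set_mult_iff_meets_coset:
  assumes "subgroup L G" "D \<subseteq> carrier G" "k \<in> carrier G"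
  shows "k \<in> D <#> L \<longleftrightarrow> D \<inter> (k <#\<^bsub>G\<^esub> L) \<noteq> {}"
proof
  assume "k \<in> D <#> L"
  then obtain a l where a: "a \<in> D" and l: "l \<in> L" and "k = a \<otimes> l"
    unfolding set_mult_def by blast
  then have "a = k \<otimes> inv l"
    using assms(2) subgroup.mem_carrier[OF assms(1) l] by (auto simp: m_assoc)
  then show "D \<inter> (k <#\<^bsub>G\<^esub> L) \<noteq> {}"
    using a subgroup.m_inv_closed[OF assms(1) l] unfolding l_coset_def by blast
next
  assume "D \<inter> (k <#\<^bsub>G\<^esub> L) \<noteq> {}"
  then obtain l where kl: "k \<otimes> l \<in> D" and l: "l \<in> L" unfolding l_coset_def by blast
  have "k = (k \<otimes> l) \<otimes> inv l"
    using assms subgroup.mem_carrier[OF assms(1) l] by (simp add: m_assoc)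
  then show "k \<in> D <#> L"
    unfolding set_mult_def using kl subgroup.m_inv_closed[OF assms(1) l] by blast
qed

lemma (in group) supplement_quotient_iso:
  assumes "subgroup A G" "L \<lhd> G" "A <#> L = K"
  shows "(G\<lparr>carrier := K\<rparr>) Mod L \<cong> (G\<lparr>carrier := A\<rparr>) Mod (A \<inter> L)"
proof -
  interpret second_isomorphism_grp L G A
    using assms unfolding second_isomorphism_grp_def second_isomorphism_grp_axioms_def by blast
  have "L <#> A = K" using commut_normal assms by metis
  then have "(G\<lparr>carrier := A\<rparr>) Mod (A \<inter> L) \<cong> (G\<lparr>carrier := K\<rparr>) Mod L"
    using is_isoI[OF normal_intersection_quotient_isom] by (simp add: Int_commute)
  then show ?thesis
    using group.iso_sym normal.factorgroup_is_group[OF normal_subgrp_intersection_normal] by blast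
qed

lemma (in group) commutator_mult_right:
  assumes "g \<in> carrier G" "a \<in> carrier G" "l \<in> carrier G"
  shows "inv g \<otimes> inv (a \<otimes> l) \<otimes> g \<otimes> (a \<otimes> l)
           = (inv g \<otimes> inv l \<otimes> g) \<otimes> (inv g \<otimes> inv a \<otimes> g \<otimes> a) \<otimes> l"
proof -
  have cancel: "g \<otimes> (inv g \<otimes> x) = x" if "x \<in> carrier G" for x
    using assms(1) that by (simp add: m_assoc[symmetric])
  show ?thesis using assms by (simp add: inv_mult_group m_assoc cancel)
qed

text \<open>If AL = K with A, L normal, then C_G(K/L) = C_G(A/(A \<inter> L)): since
  [g, al] = (g^-1 l^-1 g) [g, a] l and L is normal, [g, al] \<in> L iff [g, a] \<in> L.\<close>
lemma (in group) centralizer_factor_supplement: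
  assumes nA: "A \<lhd> G" and nL: "L \<lhd> G" and AL: "A <#> L = K"
  shows "centralizer_factor G K L = centralizer_factor G A (A \<inter> L)"
proof -
  have sA: "subgroup A G" and sL: "subgroup L G" using nA nL normal_imp_subgroup by auto
  have AK: "A \<subseteq> K" using set_mult_contains_left[OF _ sL] subgroup.subset[OF sA] AL by blast
  have comm_in_A: "inv g \<otimes> inv a \<otimes> g \<otimes> a \<in> A" if "g \<in> carrier G" "a \<in> A" for g a
    using normal.inv_op_closed1[OF nA that(1) subgroup.m_inv_closed[OF sA that(2)]]
      subgroup.m_closed[OF sA] that(2) by blast
  show ?thesis
  proof (rule equalityI; rule subsetI)
    fix g assume "g \<in> centralizer_factor G K L"
    then show "g \<in> centralizer_factor G A (A \<inter> L)"
      using AK comm_in_A unfolding centralizer_factor_def by blast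
  next
    fix g assume "g \<in> centralizer_factor G A (A \<inter> L)"
    then have g: "g \<in> carrier G" and H: "\<forall>a\<in>A. inv g \<otimes> inv a \<otimes> g \<otimes> a \<in> L"
      unfolding centralizer_factor_def by auto
    have "inv g \<otimes> inv k \<otimes> g \<otimes> k \<in> L" if kK: "k \<in> K" for k
    proof -
      obtain a l where a: "a \<in> A" and l: "l \<in> L" and k: "k = a \<otimes> l"
        using kK AL unfolding set_mult_def by blast
      have "inv g \<otimes> inv l \<otimes> g \<in> L"
        using normal.inv_op_closed1[OF nL g subgroup.m_inv_closed[OF sL l]] .
      then show ?thesis
        using commutator_mult_right[OF g subgroup.mem_carrier[OF sA a] subgroup.mem_carrier[OF sL l]]
          H a l subgroup.m_closed[OF sL] k by metis
    qed
    then show "g \<in> centralizer_factor G K L" unfolding centralizer_factor_def using g by blast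
  qed
qed

section \<open>Minimal supplements\<close>

text \<open>Compactness step: if every member of a non-empty chain \<D> of closed subgroups satisfies
  DL = K, so does \<Inter>\<D>. For k \<in> K the sets D \<inter> kL form a chain of non-empty closed sets.\<close>
lemma (in group) chain_Inter_supplement:
  assumes prof: "profinite_group G T" and L: "closedin T L" "subgroup L G"
    and ne: "\<D> \<noteq> {}"
    and D: "\<And>D. D \<in> \<D> \<Longrightarrow> closedin T D \<and> subgroup D G \<and> D <#>\<^bsub>G\<^esub> L = K"
    and chain: "\<And>D E. D \<in> \<D> \<Longrightarrow> E \<in> \<D> \<Longrightarrow> D \<subseteq> E \<or> E \<subseteq> D"
  shows "(\<Inter>\<D>) <#>\<^bsub>G\<^esub> L = K"
proof -
  obtain D0 where D0: "D0 \<in> \<D>" using ne by blast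
  have D_carrier: "D \<subseteq> carrier G" if "D \<in> \<D>" for D using D[OF that] subgroup.subset by blast
  show ?thesis
  proof
    show "(\<Inter>\<D>) <#> L \<subseteq> K" using D[OF D0] D0 mono_set_mult[of "\<Inter>\<D>" D0 L L] by blast
    show "K \<subseteq> (\<Inter>\<D>) <#> L"
    proof
      fix k assume kK: "k \<in> K"
      have k: "k \<in> carrier G"
        using kK D[OF D0] setmult_subset_G[OF D_carrier[OF D0] subgroup.subset[OF L(2)]] by blast
      define C where "C D = D \<inter> (k <#\<^bsub>G\<^esub> L)" for D
      have C_closed: "closedin T (C D)" if "D \<in> \<D>" for D
        unfolding C_def using closedin_Int D[OF that] profinite_closedin_l_coset[OF prof L(1) k]
        by blast
      have C_nonempty: "C D \<noteq> {}" if "D \<in> \<D>" for D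
        unfolding C_def using mem_set_mult_iff_meets_coset[OF L(2) D_carrier[OF that] k] D[OF that] kK
        by blast
      have "\<Inter>(C ` \<D>) \<noteq> {}"
      proof (rule compact_space_chain_Inter_nonempty)
        show "compact_space T" using prof unfolding profinite_group_def by blast
        show "closedin T U \<and> U \<noteq> {}" if "U \<in> C ` \<D>" for U
          using that C_closed C_nonempty by blast
        show "U \<subseteq> V \<or> V \<subseteq> U" if U: "U \<in> C ` \<D>" and V: "V \<in> C ` \<D>" for U V
        proof -
          obtain D E where "D \<in> \<D>" "E \<in> \<D>" "U = C D" "V = C E" using U V by blast
          then show ?thesis using chain[of D E] unfolding C_def by blast
        qed
      qed
      then obtain z where z: "z \<in> \<Inter>(C ` \<D>)" by blast
      have "z \<in> \<Inter>\<D>" using z unfolding C_def by blast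
      moreover have "z \<in> k <#\<^bsub>G\<^esub> L" using z D0 unfolding C_def by blast
      ultimately have "(\<Inter>\<D>) \<inter> (k <#\<^bsub>G\<^esub> L) \<noteq> {}" by blast
      moreover have "\<Inter>\<D> \<subseteq> carrier G" using D_carrier[OF D0] D0 by blast
      ultimately show "k \<in> (\<Inter>\<D>) <#> L"
        using mem_set_mult_iff_meets_coset[OF L(2) _ k] by blast
    qed
  qed
qed

lemma (in group) minimal_supplement_exists:
  assumes prof: "profinite_group G T" and K: "closed_normal G T K" and L: "closed_normal G T L"
    and LK: "L \<subseteq> K"
  obtains A where "closed_normal G T A" and "A <#> L = K"
    and "\<And>B. closed_normal G T B \<Longrightarrow> B <#> L = K \<Longrightarrow> B \<subseteq> A \<Longrightarrow> B = A"
proof -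
  define S where "S = {A. closed_normal G T A \<and> A <#> L = K}"
  have sK: "subgroup K G" and sL: "subgroup L G" and L_closed: "closedin T L"
    using K L normal_imp_subgroup unfolding closed_normal_def by blast+
  have "K \<in> S" using K set_mult_absorb[OF sK sL LK] unfolding S_def by blast
  moreover have "\<Inter>\<C> \<in> S" if "\<C> \<noteq> {}" "subset.chain S \<C>" for \<C>
  proof -
    have C: "\<And>C. C \<in> \<C> \<Longrightarrow> closed_normal G T C \<and> C <#> L = K"
      and chain: "\<And>C D. C \<in> \<C> \<Longrightarrow> D \<in> \<C> \<Longrightarrow> C \<subseteq> D \<or> D \<subseteq> C"
      using that(2) unfolding subset_chain_def S_def by blast+
    have "(\<Inter>\<C>) <#> L = K"
    proof (rule chain_Inter_supplement[OF prof L_closed sL that(1) _ chain])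
      fix C assume "C \<in> \<C>"
      then show "closedin T C \<and> subgroup C G \<and> C <#> L = K"
        using C normal_imp_subgroup unfolding closed_normal_def by blast
    qed
    then show ?thesis using closed_normal_Inter[OF is_group that(1)] C unfolding S_def by blast
  qed
  ultimately obtain A where A: "A \<in> S" and A_min: "\<forall>B\<in>S. B \<subseteq> A \<longrightarrow> B = A"
    using minimal_element_Inter_closed[of S] by blast
  show thesis
  proof (rule that)
    show "closed_normal G T A" "A <#> L = K" using A unfolding S_def by blast+
    show "B = A" if "closed_normal G T B" "B <#> L = K" "B \<subseteq> A" for B
      using A_min that unfolding S_def by blast
  qed
qed

lemma (in group) minimal_supplement_critical:
  assumes prof: "profinite_group G T" and chief: "chief_factor G T K L"
    and A: "closed_normal G T A" and AL: "A <#>\<^bsub>G\<^esub> L = K"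
    and minimal: "\<And>B. closed_normal G T B \<Longrightarrow> B <#>\<^bsub>G\<^esub> L = K \<Longrightarrow> B \<subseteq> A \<Longrightarrow> B = A"
  shows "critical_pair G T A (A \<inter> L)"
proof -
  have L: "closed_normal G T L" and LK: "L \<subset> K"
    and no_between: "\<And>N. closed_normal G T N \<Longrightarrow> L \<subset> N \<Longrightarrow> N \<subset> K \<Longrightarrow> False"
    using chief unfolding chief_factor_def by blast+
  have nA: "A \<lhd> G" and nL: "L \<lhd> G" using A L unfolding closed_normal_def by auto
  have sA: "subgroup A G" and sL: "subgroup L G" using nA nL normal_imp_subgroup by auto
  have "\<not> A \<subseteq> L"
  proof
    assume "A \<subseteq> L"
    then have "K \<subseteq> L <#> L" using AL mono_set_mult by blast
    then show False using set_mult_absorb[OF sL sL] LK by blast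
  qed
  moreover have "closed_normal G T (A \<inter> L)"
    using closed_normal_Inter[OF is_group, of "{A, L}" T] A L by auto
  moreover have "N \<subseteq> A \<inter> L" if N: "closed_normal G T N" and NA: "N \<subset> A" for N
  proof -
    have nN: "N \<lhd> G" using N unfolding closed_normal_def by blast
    then have sN: "subgroup N G" using normal_imp_subgroup by blast
    have "closedin T (N <#> L)"
      using profinite_closedin_set_mult[OF prof] N L unfolding closed_normal_def by blast
    then have NL: "closed_normal G T (N <#> L)"
      unfolding closed_normal_def using normal_subgroup_set_mult_closed[OF nN nL] by blast
    have "L \<subseteq> N <#> L" using set_mult_contains_right[OF sN] subgroup.subset[OF sL] .
    moreover have "N <#> L \<subseteq> K" using NA AL mono_set_mult[of N A L L] by blast
    moreover have "N <#> L \<noteq> K" using minimal[OF N] NA by blast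
    ultimately have "N <#> L = L" using no_between[OF NL] by blast
    then show ?thesis
      using set_mult_contains_left[OF subgroup.subset[OF sN] sL] NA by blast
  qed
  ultimately show ?thesis unfolding critical_pair_def using A by blast
qed

theorem lemma11:
  fixes G :: "('a, 'b) monoid_scheme" and T :: "'a topology" and K L :: "'a set"
  assumes "profinite_group G T"
    and "just_infinite G T"
    and "chief_factor G T K L"
  shows "\<exists>A. critical_pair G T A (A \<inter> L) \<and> A <#>\<^bsub>G\<^esub> L = K
          \<and> ((G\<lparr>carrier := K\<rparr>) Mod L \<cong> (G\<lparr>carrier := A\<rparr>) Mod (A \<inter> L))
          \<and> centralizer_factor G K L = centralizer_factor G A (A \<inter> L)"
proof -
  have grp: "group G" using assms(1) unfolding profinite_group_def by blast
  have K: "closed_normal G T K" and L: "closed_normal G T L" and LK: "L \<subset> K"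
    using assms(3) unfolding chief_factor_def by blast+
  obtain A where A: "closed_normal G T A" and AL: "A <#>\<^bsub>G\<^esub> L = K"
    and minimal: "\<And>B. closed_normal G T B \<Longrightarrow> B <#>\<^bsub>G\<^esub> L = K \<Longrightarrow> B \<subseteq> A \<Longrightarrow> B = A"
    using group.minimal_supplement_exists[OF grp assms(1) K L psubset_imp_subset[OF LK]] by metis
  have nA: "A \<lhd> G" and nL: "L \<lhd> G" using A L unfolding closed_normal_def by blast+
  have "critical_pair G T A (A \<inter> L)"
    using group.minimal_supplement_critical[OF grp assms(1,3) A AL minimal] .
  moreover have "(G\<lparr>carrier := K\<rparr>) Mod L \<cong> (G\<lparr>carrier := A\<rparr>) Mod (A \<inter> L)"
    using group.supplement_quotient_iso[OF grp normal_imp_subgroup[OF nA] nL AL] .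
  moreover have "centralizer_factor G K L = centralizer_factor G A (A \<inter> L)"
    using group.centralizer_factor_supplement[OF grp nA nL AL] .
  ultimately show ?thesis using AL by blast
qed

end
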